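(* Absorption does not hold between $SIS$ and any of $III$, $IIS$, $SII$: for each $st\in\{III, IIS, SII\}$, $SIS\circ st\neq SIS$ and $st\circ SIS\neq st$ (as partial functions on terms); a witnessing term is $(\lambda k.k\,\Omega)(\lambda x.y)$, where $\Omega=(\lambda x.xx)(\lambda x.xx)$.
   Context: Terms: $\Lambda ::= x\mid\lambda x.\Lambda\mid\Lambda\Lambda$; $[N/x]B$ is capture-avoiding substitution. An evaluator is a partial function $\Lambda\rightharpoonup\Lambda$ defined by inference rules, undefined (divergent) where no finite derivation exists; $\mathrm{id}$ is the identity; composition is undefined where the inner evaluator is. Eval-apply template: given evaluators $la,op_1,ar_1,op_2,ar_2$ (possibly $ea$ itself), $ea$ is defined by (var) $ea(x)=x$; (abs) $ea(\lambda x.B)=\lambda x.B'$ if $la(B)=B'$; (con) $ea(MN)=B'$ if $op_1(M)=\lambda x.B$, $ar_1(N)=N'$, $ea([N'/x]B)=B'$; (neu) $ea(MN)=M''N'$ if $op_1(M)=M'$, $M'$ not an abstraction, $op_2(M')=M''$, $ar_2(N)=N'$. Uniform evaluator $XYZ\in\{I,S\}^3$: $op_1=ea$, $op_2=\mathrm{id}$, and $la$, $ar_1$, $ar_2$ equal to $ea$ itself when the corresponding letter $X$, $Y$, $Z$ is $S$ and to $\mathrm{id}$ when it is $I$. A strategy $st_2$ absorbs $st_1$ iff $st_2\circ st_1=st_2$. *)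

theory Defs
  imports Main
begin

text \<open>Lambda terms, represented with de Bruijn indices (i.e. terms up to alpha-equivalence).\<close>
datatype dB = Var nat | App dB dB | Abs dB

primrec lift :: "dB \<Rightarrow> nat \<Rightarrow> dB" where
  "lift (Var i) k = (if i < k then Var i else Var (Suc i))"
| "lift (App s t) k = App (lift s k) (lift t k)"
| "lift (Abs s) k = Abs (lift s (Suc k))"

text \<open>Capture-avoiding substitution: subst B N k is [N/k]B (and decrements indices above k).\<close>
primrec subst :: "dB \<Rightarrow> dB \<Rightarrow> nat \<Rightarrow> dB" where
  "subst (Var i) s k = (if k < i then Var (i - 1) else if i = k then s else Var i)"
| "subst (App t u) s k = App (subst t s k) (subst u s k)"
| "subst (Abs t) s k = Abs (subst t (lift s 0) (Suc k))"

fun is_abs :: "dB \<Rightarrow> bool" where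
  "is_abs (Abs _) = True"
| "is_abs _ = False"

datatype letter = I | S

text \<open>Big-step relation of the uniform evaluator XYZ (eval-apply template with
  op1 = ea, op2 = id, la/ar1/ar2 = ea if the letter is S, id if it is I).\<close>
inductive uev :: "letter \<Rightarrow> letter \<Rightarrow> letter \<Rightarrow> dB \<Rightarrow> dB \<Rightarrow> bool"
  for X Y Z where
  var: "uev X Y Z (Var i) (Var i)"
| abs: "(X = S \<and> uev X Y Z B B') \<or> (X = I \<and> B' = B) \<Longrightarrow> uev X Y Z (Abs B) (Abs B')"
| con: "uev X Y Z M (Abs B) \<Longrightarrow> (Y = S \<and> uev X Y Z N N') \<or> (Y = I \<and> N' = N) \<Longrightarrow>
        uev X Y Z (subst B N' 0) B' \<Longrightarrow> uev X Y Z (App M N) B'"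
| neu: "uev X Y Z M M' \<Longrightarrow> \<not> is_abs M' \<Longrightarrow> (Z = S \<and> uev X Y Z N N') \<or> (Z = I \<and> N' = N) \<Longrightarrow>
        uev X Y Z (App M N) (App M' N')"

text \<open>The evaluator as a partial function (None = undefined/divergent).\<close>
definition ev :: "letter \<Rightarrow> letter \<Rightarrow> letter \<Rightarrow> dB \<Rightarrow> dB option" where
  "ev X Y Z t = (if \<exists>u. uev X Y Z t u then Some (THE u. uev X Y Z t u) else None)"

definition Omega :: dB where
  "Omega = App (Abs (App (Var 0) (Var 0))) (Abs (App (Var 0) (Var 0)))"

text \<open>(\<lambda>k. k \<Omega>) (\<lambda>x. y), with y the free variable of index 0.\<close>
definition witness :: dB where
  "witness = App (Abs (App (Var 0) Omega)) (Abs (Var 1))"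

end

theory Submission
  imports Defs
begin

text \<open>Under SIS the witness diverges: reducing under the binder of \<open>\<lambda>k. k \<Omega>\<close> reaches
  the neutral application \<open>k \<Omega>\<close>, whose argument \<open>\<Omega>\<close> is then evaluated. The strategies III, IIS
  and SII either do not reduce under \<open>\<lambda>\<close> or leave arguments of neutral terms alone, and none
  evaluates operands before contraction, so they contract \<open>(\<lambda>k. k \<Omega>) (\<lambda>x. y)\<close> and then
  \<open>(\<lambda>x. y) \<Omega>\<close>, discarding \<open>\<Omega>\<close> and returning \<open>y\<close>. Since SIS fixes \<open>y\<close>, composing SIS with
  any of them, in either order, changes the value at the witness.\<close>

lemma uev_deterministic: "uev X Y Z t u \<Longrightarrow> uev X Y Z t u' \<Longrightarrow> u = u'"
proof (induction arbitrary: u' rule: uev.induct)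
  case (con M B N N' B')
  from con.prems show ?case
  proof (cases rule: uev.cases)
    case (con B2 N2)
    have "B = B2" using con.IH(1) con(1) by blast
    moreover have "N' = N2" using con.IH(2) con.hyps(2) con(2) by blast
    ultimately show ?thesis using con.IH(3) con(3) by blast
  next
    case (neu M2 N2)
    then show ?thesis using con.IH(1) by fastforce
  qed
next
  case (neu M M' N N')
  from neu.prems show ?case
  proof (cases rule: uev.cases)
    case (con B2 N2)
    then show ?thesis using neu.IH(1) neu.hyps(2) by fastforce
  next
    case (neu M2 N2)
    have "M' = M2" using neu.IH(1) neu(2) by blast
    moreover have "N' = N2" using neu.IH neu.hyps neu(4) by blast
    ultimately show ?thesis using neu(1) by simp
  qed
qed (auto elim: uev.cases)

lemma ev_eq_SomeI: "uev X Y Z t u \<Longrightarrow> ev X Y Z t = Some u"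
  unfolding ev_def using uev_deterministic by (auto intro: the_equality)

lemma ev_eq_NoneI: "(\<And>u. \<not> uev X Y Z t u) \<Longrightarrow> ev X Y Z t = None"
  unfolding ev_def by auto

lemma uev_Var_iff: "uev X Y Z (Var i) u \<longleftrightarrow> u = Var i"
  by (auto intro: uev.var elim: uev.cases)

lemma uev_Abs_is_abs: "uev X Y Z (Abs B) u \<Longrightarrow> is_abs u"
  by (auto elim: uev.cases)

lemma uev_App_Var_Var: "uev X Y Z (App (Var i) (Var j)) (App (Var i) (Var j))"
  by (rule uev.neu; cases Z) (simp_all add: uev_Var_iff)

lemma uev_self_app: "uev X Y Z (Abs (App (Var 0) (Var 0))) (Abs (App (Var 0) (Var 0)))"
  by (rule uev.abs) (cases X; simp add: uev_App_Var_Var)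

text \<open>The operator of \<open>\<Omega>\<close> evaluates to itself and its body is closed under the substitution,
  so every derivation for \<open>\<Omega>\<close> contains a strictly smaller one for \<open>\<Omega>\<close>.\<close>
lemma Omega_diverges: "\<not> uev X Y Z Omega u"
proof
  assume "uev X Y Z Omega u"
  then show False
  proof (induction "Omega" u rule: uev.induct)
    case (con M B N N' B')
    then have "M = Abs (App (Var 0) (Var 0))" and N: "N = Abs (App (Var 0) (Var 0))"
      by (auto simp: Omega_def)
    then have "B = App (Var 0) (Var 0)"
      using con.hyps(1) uev_self_app uev_deterministic by blast
    moreover have "N' = N"
      using con N uev_deterministic[OF uev_self_app] by blast
    ultimately show ?case using con N by (simp add: Omega_def)
  next
    case (neu M M' N N')
    then show ?case using uev_Abs_is_abs by (auto simp: Omega_def)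
  qed (auto simp: Omega_def)
qed

lemma witness_diverges_SYS: "\<not> uev S Y S witness u"
proof
  have body: "\<not> uev S Y S (App (Var 0) Omega) v" for v
  proof
    assume "uev S Y S (App (Var 0) Omega) v"
    then show False
      by (cases rule: uev.cases) (auto simp: uev_Var_iff Omega_diverges)
  qed
  have operator: "\<not> uev S Y S (Abs (App (Var 0) Omega)) (Abs B)" for B
  proof
    assume "uev S Y S (Abs (App (Var 0) Omega)) (Abs B)"
    then show False
      by (cases rule: uev.cases) (auto simp: body)
  qed
  assume "uev S Y S witness u"
  then show False
    unfolding witness_def
    by (cases rule: uev.cases) (auto simp: operator dest: uev_Abs_is_abs)
qed

lemma uev_Abs_neutral_unchanged:
  "X = I \<or> Z = I \<Longrightarrow> uev X Y Z (Abs (App (Var i) N)) (Abs (App (Var i) N))"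
  by (rule uev.abs) (cases X; auto intro: uev.neu uev.var)

text \<open>With \<open>Y = I\<close> the argument \<open>\<Omega>\<close> of the constant function \<open>\<lambda>x. y\<close> is never evaluated.\<close>
lemma witness_evaluates_XIZ: "X = I \<or> Z = I \<Longrightarrow> uev X I Z witness (Var 0)"
  unfolding witness_def
proof (rule uev.con[where N' = "Abs (Var 1)"])
  assume "X = I \<or> Z = I"
  then show "uev X I Z (Abs (App (Var 0) Omega)) (Abs (App (Var 0) Omega))"
    by (rule uev_Abs_neutral_unchanged)
  have "uev X I Z (Abs (Var 1)) (Abs (Var 1))"
    by (rule uev.abs) (cases X; simp add: uev_Var_iff)
  then have "uev X I Z (App (Abs (Var 1)) Omega) (Var 0)"
    by (rule uev.con[where N' = Omega]) (simp_all add: uev_Var_iff)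
  then show "uev X I Z (subst (App (Var 0) Omega) (Abs (Var 1)) 0) (Var 0)"
    by (simp add: Omega_def)
qed simp

theorem mainTheorem4:
  shows "\<forall>st \<in> {ev I I I, ev I I S, ev S I I}.
           ev S I S \<circ>\<^sub>m st \<noteq> ev S I S \<and> st \<circ>\<^sub>m ev S I S \<noteq> st \<and>
           (ev S I S \<circ>\<^sub>m st) witness \<noteq> ev S I S witness \<and>
           (st \<circ>\<^sub>m ev S I S) witness \<noteq> st witness"
proof
  fix st assume "st \<in> {ev I I I, ev I I S, ev S I I}"
  then have st_witness: "st witness = Some (Var 0)"
    by (auto intro!: ev_eq_SomeI witness_evaluates_XIZ)
  have SIS_witness: "ev S I S witness = None"
    by (rule ev_eq_NoneI) (rule witness_diverges_SYS)
  have SIS_Var: "ev S I S (Var 0) = Some (Var 0)"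
    by (rule ev_eq_SomeI) (rule uev.var)
  have "(ev S I S \<circ>\<^sub>m st) witness \<noteq> ev S I S witness"
    and "(st \<circ>\<^sub>m ev S I S) witness \<noteq> st witness"
    using st_witness SIS_witness SIS_Var by simp_all
  then show "ev S I S \<circ>\<^sub>m st \<noteq> ev S I S \<and> st \<circ>\<^sub>m ev S I S \<noteq> st \<and>
           (ev S I S \<circ>\<^sub>m st) witness \<noteq> ev S I S witness \<and>
           (st \<circ>\<^sub>m ev S I S) witness \<noteq> st witness"
    by auto
qed

end
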